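(* Let $G=(V,E)$ be a graph. Then $\mu(G)=\min|E_G(S;V\setminus T)|$, where the minimum ranges over all pairs of disjoint subsets $S,T\subseteq V$ with $|S|>|T|$.
   Context: All graphs are finite and simple. For a graph $G=(V,E)$ on $n$ vertices, a fractional vertex cover is a function $f:V\to[0,\infty)$ with $f(u)+f(v)\ge 1$ for every edge $uv\in E$; $\tau^*(G)$ denotes the minimum of $\sum_{v\in V}f(v)$ over all fractional vertex covers. For $E'\subseteq E$ let $G-E'=(V,E\setminus E')$. Define $\mu(G)=\min\{|E'| : E'\subseteq E,\ \tau^*(G-E')<n/2\}$. For disjoint $S,T\subseteq V$, $E_G(S;V\setminus T)$ denotes the set of edges of $G$ that either have both endpoints in $S$, or have one endpoint in $S$ and the other in $V\setminus(S\cup T)$. *)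

theory Defs
  imports Complex_Main
begin

definition simple_graph :: "'a set \<Rightarrow> 'a set set \<Rightarrow> bool" where
  "simple_graph V E \<longleftrightarrow> finite V \<and> (\<forall>e\<in>E. e \<subseteq> V \<and> card e = 2)"

definition frac_vertex_cover :: "'a set \<Rightarrow> 'a set set \<Rightarrow> ('a \<Rightarrow> real) \<Rightarrow> bool" where
  "frac_vertex_cover V E f \<longleftrightarrow>
     (\<forall>v\<in>V. f v \<ge> 0) \<and> (\<forall>u v. {u, v} \<in> E \<longrightarrow> f u + f v \<ge> 1)"

definition tau_star :: "'a set \<Rightarrow> 'a set set \<Rightarrow> real" where
  "tau_star V E = Inf {(\<Sum>v\<in>V. f v) | f. frac_vertex_cover V E f}"

definition mu :: "'a set \<Rightarrow> 'a set set \<Rightarrow> nat" where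
  "mu V E = Inf {card E' | E'. E' \<subseteq> E \<and> tau_star V (E - E') < real (card V) / 2}"

definition edges_ST :: "'a set \<Rightarrow> 'a set set \<Rightarrow> 'a set \<Rightarrow> 'a set \<Rightarrow> 'a set set" where
  "edges_ST V E S T = {e \<in> E. \<exists>u v. e = {u, v} \<and> u \<in> S \<and> (v \<in> S \<or> v \<in> V - (S \<union> T))}"

end

theory Submission
  imports Defs
begin

text \<open>
  Write b = f - 1/2 for a fractional vertex cover f of weight below n/2. Then b has negative sum
  and b u + b v \<ge> 0 on every edge. Repeatedly pairing the most negative value with a value at
  least as large in absolute value shows that a negative sum forces a threshold s \<ge> 0 with more
  vertices below -s than above s; for S = {b < -s} and T = {b > s} the set E(S; V - T) is then
  empty. Conversely, if E(S; V - T) is empty, the weights 0 on S, 1 on T and 1/2 elsewhere form a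
  fractional cover of weight (n - |S| + |T|)/2 < n/2. So deleting E' pushes the fractional cover
  number below n/2 exactly when E' contains some E(S; V - T).
\<close>

definition negative_tails_dominated :: "('a \<Rightarrow> 'b::linordered_ab_group_add) \<Rightarrow> 'a set \<Rightarrow> bool" where
  "negative_tails_dominated b X \<longleftrightarrow>
     (\<forall>s\<ge>0. card {x\<in>X. b x < - s} \<le> card {x\<in>X. s < b x})"

lemma counterweight_if_negative_tails_dominated:
  assumes "finite X" and "negative_tails_dominated b X" and "u \<in> X" and "b u < 0"
  obtains w where "w \<in> X" and "- b u \<le> b w"
proof -
  define s where "s = max 0 (Max (b ` X))"
  have "b x \<le> s" if "x \<in> X" for x
    using assms(1) that unfolding s_def by (simp add: le_max_iff_disj)
  then have none_above: "{x\<in>X. s < b x} = {}" by (auto simp: not_less[symmetric])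
  have "0 \<le> s" by (simp add: s_def)
  then have "card {x\<in>X. b x < - s} \<le> card {x\<in>X. s < b x}"
    using assms(2) unfolding negative_tails_dominated_def by blast
  then have "card {x\<in>X. b x < - s} = 0" unfolding none_above by simp
  then have "- b u \<le> s"
    using assms(1,3) by (auto simp: card_eq_0_iff not_less minus_le_iff)
  moreover have "0 < - b u" using assms(4) by simp
  ultimately have "- b u \<le> Max (b ` X)"
    unfolding s_def by (auto simp: le_max_iff_disj)
  moreover have "Max (b ` X) \<in> b ` X"
    using assms(1,3) by (intro Max_in) auto
  ultimately show ?thesis using that by auto
qed

lemma negative_tails_dominated_Diff_min_counterweight:
  assumes "negative_tails_dominated b X" and "finite X"
    and "u \<in> X" and u_min: "\<forall>x\<in>X. b u \<le> b x" and "b u < 0"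
    and "w \<in> X" and "- b u \<le> b w"
  shows "negative_tails_dominated b (X - {u, w})"
  unfolding negative_tails_dominated_def
proof (intro allI impI)
  fix s :: 'b assume "0 \<le> s"
  show "card {x\<in>X - {u, w}. b x < - s} \<le> card {x\<in>X - {u, w}. s < b x}"
  proof (cases "s < - b u")
    case True
    have "0 < - b u" using assms(5) by simp
    then have "0 < b w" using assms(7) by (rule less_le_trans)
    have "- s \<le> 0" using \<open>0 \<le> s\<close> by simp
    then have "- s < b w" using \<open>0 < b w\<close> by (rule le_less_trans)
    moreover have "b u < - s" using True by (simp add: less_minus_iff)
    ultimately have below: "{x\<in>X. b x < - s} = insert u {x\<in>X - {u, w}. b x < - s}"
      using assms(3) by auto
    moreover have above: "{x\<in>X. s < b x} = insert w {x\<in>X - {u, w}. s < b x}"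
    proof -
      have "s < b w" using True assms(7) by (rule less_le_trans)
      moreover have "\<not> s < b u" using assms(5) \<open>0 \<le> s\<close> by simp
      ultimately show ?thesis using assms(6) by auto
    qed
    have "card {x\<in>X. b x < - s} \<le> card {x\<in>X. s < b x}"
      using assms(1) \<open>0 \<le> s\<close> unfolding negative_tails_dominated_def by blast
    then show ?thesis using assms(2) unfolding below above by simp
  next
    case False
    then have none_below: "{x\<in>X - {u, w}. b x < - s} = {}"
      using u_min by (force simp: not_less minus_le_iff)
    show ?thesis unfolding none_below by simp
  qed
qed

lemma sum_nonneg_if_negative_tails_dominated:
  assumes "finite X" and "negative_tails_dominated b X"
  shows "0 \<le> sum b X"
  using assms
proof (induction X rule: finite_psubset_induct)
  case (psubset X)
  show ?case
  proof (cases "\<forall>x\<in>X. 0 \<le> b x")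
    case True
    then show ?thesis by (simp add: sum_nonneg)
  next
    case False
    then have "X \<noteq> {}" by auto
    then have "Min (b ` X) \<in> b ` X" using psubset.hyps by simp
    then obtain u where "u \<in> X" and "b u = Min (b ` X)" by auto
    then have u_min: "\<forall>x\<in>X. b u \<le> b x" using psubset.hyps by simp
    have "b u < 0" using False u_min by force
    then obtain w where "w \<in> X" and "- b u \<le> b w"
      by (rule counterweight_if_negative_tails_dominated[OF psubset.hyps psubset.prems \<open>u \<in> X\<close>])
    then have "u \<noteq> w" using \<open>b u < 0\<close> by auto
    have "0 \<le> sum b (X - {u, w})"
      using \<open>u \<in> X\<close> negative_tails_dominated_Diff_min_counterweight[OF psubset.prems psubset.hyps
          \<open>u \<in> X\<close> u_min \<open>b u < 0\<close> \<open>w \<in> X\<close> \<open>- b u \<le> b w\<close>]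
      by (intro psubset.IH) auto
    moreover have "sum b X = (b u + b w) + sum b (X - {u, w})"
    proof -
      have "sum b X = b u + sum b (X - {u})"
        using psubset.hyps \<open>u \<in> X\<close> by (rule sum.remove)
      also have "sum b (X - {u}) = b w + sum b (X - {u, w})"
        using psubset.hyps \<open>w \<in> X\<close> \<open>u \<noteq> w\<close> unfolding Diff_insert2[of X u "{w}"]
        by (intro sum.remove) auto
      finally show ?thesis by (simp add: add.assoc)
    qed
    moreover have "0 \<le> b u + b w" using add_left_mono[OF \<open>- b u \<le> b w\<close>, of "b u"] by simp
    ultimately show ?thesis by simp
  qed
qed

lemma Inf_coinitial_subset_nat:
  fixes A B :: "nat set"
  assumes "B \<subseteq> A" and "\<And>a. a \<in> A \<Longrightarrow> \<exists>b\<in>B. b \<le> a"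
  shows "Inf A = Inf B"
proof (cases "A = {}")
  case True
  with assms(1) show ?thesis by simp
next
  case False
  then have "Inf A \<in> A" by (rule Inf_nat_def1)
  then obtain b where "b \<in> B" and "b \<le> Inf A" using assms(2) by blast
  have "Inf B \<le> b" using \<open>b \<in> B\<close> by (simp add: cInf_lower)
  also have "\<dots> \<le> Inf A" by fact
  finally have "Inf B \<le> Inf A" .
  moreover have "Inf B \<in> A" using \<open>b \<in> B\<close> assms(1) Inf_nat_def1 by blast
  then have "Inf A \<le> Inf B" by (simp add: cInf_lower)
  ultimately show ?thesis by simp
qed

lemma tau_star_less_iff:
  "tau_star V E < c \<longleftrightarrow> (\<exists>f. frac_vertex_cover V E f \<and> sum f V < c)"
proof -
  have "frac_vertex_cover V E (\<lambda>_. 1)" by (simp add: frac_vertex_cover_def)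
  then have "{sum f V | f. frac_vertex_cover V E f} \<noteq> {}" by blast
  moreover have "bdd_below {sum f V | f. frac_vertex_cover V E f}"
    by (rule bdd_belowI[of _ 0]) (auto simp: frac_vertex_cover_def intro: sum_nonneg)
  ultimately show ?thesis unfolding tau_star_def by (auto simp: cInf_less_iff)
qed

lemma edges_ST_Diff: "edges_ST V (E - F) S T = edges_ST V E S T - F"
  unfolding edges_ST_def by blast

lemma edges_ST_subset: "edges_ST V E S T \<subseteq> E"
  unfolding edges_ST_def by blast

lemma edges_ST_eq_empty_iff:
  assumes "S \<subseteq> V"
  shows "edges_ST V E S T = {} \<longleftrightarrow>
    (\<forall>u v. {u, v} \<in> E \<longrightarrow> u \<in> S \<longrightarrow> v \<in> V \<longrightarrow> v \<in> T - S)"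
  using assms unfolding edges_ST_def by blast

lemma empty_edges_ST_if_tau_star_less_half:
  assumes "finite V" and "tau_star V E < card V / 2"
  obtains S T where "S \<subseteq> V" "T \<subseteq> V" "S \<inter> T = {}" "card S > card T"
    and "edges_ST V E S T = {}"
proof -
  obtain f where f: "frac_vertex_cover V E f" "sum f V < card V / 2"
    using assms(2) tau_star_less_iff by blast
  define b where "b v = f v - 1 / 2" for v
  have "sum b V < 0" using f(2) by (simp add: b_def sum_subtractf)
  then obtain s where "0 \<le> s" and more_below: "card {x\<in>V. b x > s} < card {x\<in>V. b x < - s}"
    using sum_nonneg_if_negative_tails_dominated[OF assms(1), of b]
    unfolding negative_tails_dominated_def by (meson not_le)
  define S where "S = {x\<in>V. b x < - s}"
  define T where "T = {x\<in>V. b x > s}"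
  have "S \<subseteq> V" unfolding S_def by blast
  have "edges_ST V E S T = {}"
    unfolding edges_ST_eq_empty_iff[OF \<open>S \<subseteq> V\<close>]
  proof (intro allI impI)
    fix u v assume "{u, v} \<in> E" "u \<in> S" "v \<in> V"
    moreover have "f u + f v \<ge> 1" using f(1) \<open>{u, v} \<in> E\<close> by (simp add: frac_vertex_cover_def)
    ultimately show "v \<in> T - S"
      using \<open>0 \<le> s\<close> unfolding S_def T_def b_def by auto
  qed
  moreover have "S \<inter> T = {}" using \<open>0 \<le> s\<close> unfolding S_def T_def by auto
  ultimately show ?thesis
    using that[of S T] more_below unfolding S_def T_def by auto
qed

lemma tau_star_less_half_if_empty_edges_ST:
  assumes "finite V" and "\<forall>e\<in>E. e \<subseteq> V"
    and "S \<subseteq> V" "T \<subseteq> V" "S \<inter> T = {}" "card S > card T"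
    and "edges_ST V E S T = {}"
  shows "tau_star V E < card V / 2"
proof -
  define f :: "'a \<Rightarrow> real" where "f v = (1 + of_bool (v \<in> T) - of_bool (v \<in> S)) / 2" for v
  have cover: "frac_vertex_cover V E f"
    unfolding frac_vertex_cover_def
  proof (intro conjI ballI allI impI)
    fix v show "0 \<le> f v" by (simp add: f_def)
  next
    fix u v assume uv: "{u, v} \<in> E"
    then have "{v, u} \<in> E" by (simp add: insert_commute)
    moreover have "u \<in> V" "v \<in> V" using uv assms(2) by auto
    ultimately have "u \<in> S \<Longrightarrow> v \<in> T - S" "v \<in> S \<Longrightarrow> u \<in> T - S"
      using uv assms(7) edges_ST_eq_empty_iff[OF assms(3)] by blast+
    then show "1 \<le> f u + f v" using assms(5) by (auto simp: f_def)
  qed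
  have "sum f V = (\<Sum>v\<in>V. 1 + of_bool (v \<in> T) - of_bool (v \<in> S)) / 2"
    by (simp add: f_def sum_divide_distrib)
  also have "\<dots> = (real (card V) + card T - card S) / 2"
    using assms(1,3,4)
    by (simp add: sum.distrib sum_subtractf sum_of_bool_eq Int_absorb1 Int_absorb2)
  also have "\<dots> < card V / 2" using assms(6) by simp
  finally show ?thesis using cover tau_star_less_iff by blast
qed

corollary tau_star_Diff_edges_ST_less_half:
  assumes "finite V" and "\<forall>e\<in>E. e \<subseteq> V"
    and "S \<subseteq> V" "T \<subseteq> V" "S \<inter> T = {}" "card S > card T"
  shows "tau_star V (E - edges_ST V E S T) < card V / 2"
  using assms
  by (intro tau_star_less_half_if_empty_edges_ST[OF assms(1) _ assms(3-6)])
    (auto simp: edges_ST_Diff)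

corollary edges_ST_subset_if_tau_star_Diff_less_half:
  assumes "finite V" and "tau_star V (E - E') < card V / 2"
  obtains S T where "S \<subseteq> V" "T \<subseteq> V" "S \<inter> T = {}" "card S > card T"
    and "edges_ST V E S T \<subseteq> E'"
proof -
  obtain S T where "S \<subseteq> V" "T \<subseteq> V" "S \<inter> T = {}" "card S > card T"
    and "edges_ST V (E - E') S T = {}"
    by (rule empty_edges_ST_if_tau_star_less_half[OF assms])
  then show ?thesis using that by (simp add: edges_ST_Diff)
qed

theorem corollary6:
  fixes V :: "'a set" and E :: "'a set set"
  assumes "simple_graph V E"
  shows "mu V E = Inf {card (edges_ST V E S T) | S T.
            S \<subseteq> V \<and> T \<subseteq> V \<and> S \<inter> T = {} \<and> card S > card T}"
proof -
  have "finite V" and edges_in_V: "\<forall>e\<in>E. e \<subseteq> V"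
    using assms unfolding simple_graph_def by auto
  then have "finite E" by (meson PowI finite_Pow_iff finite_subset subsetI)
  define R where "R = {card (edges_ST V E S T) | S T.
    S \<subseteq> V \<and> T \<subseteq> V \<and> S \<inter> T = {} \<and> card S > card T}"
  define M where "M = {card E' | E'. E' \<subseteq> E \<and> tau_star V (E - E') < card V / 2}"
  have "R \<subseteq> M"
  proof
    fix k assume "k \<in> R"
    then obtain S T where "k = card (edges_ST V E S T)"
      and ST: "S \<subseteq> V" "T \<subseteq> V" "S \<inter> T = {}" "card S > card T"
      unfolding R_def by blast
    with tau_star_Diff_edges_ST_less_half[OF \<open>finite V\<close> edges_in_V ST] edges_ST_subset
    show "k \<in> M" unfolding M_def by blast
  qed
  moreover have "\<exists>j\<in>R. j \<le> k" if k: "k \<in> M" for k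
  proof -
    obtain E' where "k = card E'" "E' \<subseteq> E" and "tau_star V (E - E') < card V / 2"
      using k unfolding M_def by blast
    obtain S T where "S \<subseteq> V" "T \<subseteq> V" "S \<inter> T = {}" "card S > card T"
      and "edges_ST V E S T \<subseteq> E'"
      by (rule edges_ST_subset_if_tau_star_Diff_less_half[OF \<open>finite V\<close> \<open>tau_star V (E - E') < _\<close>])
    moreover from this have "card (edges_ST V E S T) \<le> k"
      using \<open>k = card E'\<close> \<open>E' \<subseteq> E\<close> \<open>finite E\<close> by (simp add: card_mono finite_subset)
    ultimately show ?thesis unfolding R_def by blast
  qed
  ultimately show ?thesis
    unfolding mu_def M_def[symmetric] R_def[symmetric] by (rule Inf_coinitial_subset_nat)
qed

end
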